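(* Let $\mathcal{T}$ be a triangulation of $C(2d+4,2d+1)$ which is neither the upper triangulation nor the lower triangulation. Let $A$ be the unique mutable $d$-simplex of $\mathcal{T}$ and let $\Sigma$ be the support of $A$ (with respect to $\operatorname{simp}(\mathcal{T})$). Then every internal $d$-simplex $A'$ of $\mathcal{T}$ satisfies $A'\subseteq A\cup\Sigma$.
   Context: $C(V,n)$ is the cyclic polytope on a finite ordered set $V$ (convex hull of $(t_v,\dots,t_v^n)$, $t_v$ increasing); $C(m,n)=C([m],n)$; a triangulation is a set of $(n+1)$-subsets of $V$ whose geometric simplices form a simplicial complex covering $C(V,n)$; its simplices include all faces of its members. Subsets are written increasingly, $A=(a_0,a_1,\dots)$. An $n$-subset $F$ is a lower (upper) facet of $C(V,n)$ iff each $w\in V\setminus F$ has an even (odd) number of elements of $F$ above it; the lower (upper) triangulation of $C(V,n)$ is the set of lower (upper) facets of $C(V,n+1)$. A $(d+1)$-subset of $[m]$ is an internal $d$-simplex of $C(m,2d+1)$ if it lies in no facet; $\nu_{m,d}$ denotes the set of these; $\operatorname{simp}(\mathcal{T})$ is the set of internal $d$-simplices that are faces of simplices of $\mathcal{T}$. For a $d$-subset $\Sigma$ and $(d+1)$-subset $A$, $\Sigma\wr A$ means $a_0<\sigma_0<a_1<\dots<\sigma_{d-1}<a_d$; for a $(d+1)$-subset $A$ and $(d+2)$-subset $B$, $A\wr B$ means $b_0<a_0<b_1<\dots<a_d<b_{d+1}$. $A\in\operatorname{simp}(\mathcal{T})$ is mutable if there is a $(d+2)$-subset $B$ with $A\wr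 B$ such that $\{S\in\mathcal{T}:S\subseteq A\cup B\}$ is the lower triangulation of $C(A\cup B,2d+1)$. A support of $A\in\mathbf{X}\subseteq\nu_{m,d}$ is a $d$-subset $\Sigma$ with $\Sigma\wr A$ such that every $C\in\nu_{m,d}$ with $C\subseteq A\cup\Sigma$ lies in $\mathbf{X}$. *)

theory Defs
  imports Complex_Main
begin

text \<open>Vertex v of V (a finite set of naturals, ordered as naturals) is the point
  (t v, t v^2, ..., t v^n) of R^n, encoded as a function nat => real whose coordinate
  k (k < n) is t v ^ (k+1) and which vanishes for k >= n.\<close>

definition cpt :: "(nat \<Rightarrow> real) \<Rightarrow> nat \<Rightarrow> nat \<Rightarrow> (nat \<Rightarrow> real)" where
  "cpt t n v = (\<lambda>k. if k < n then t v ^ (k + 1) else 0)"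

definition conv :: "(nat \<Rightarrow> real) \<Rightarrow> nat \<Rightarrow> nat set \<Rightarrow> (nat \<Rightarrow> real) set" where
  "conv t n S = {x. \<exists>u::nat \<Rightarrow> real. (\<forall>v\<in>S. 0 \<le> u v) \<and> (\<Sum>v\<in>S. u v) = 1
                     \<and> x = (\<lambda>k. \<Sum>v\<in>S. u v * cpt t n v k)}"

definition triangulation :: "(nat \<Rightarrow> real) \<Rightarrow> nat set \<Rightarrow> nat \<Rightarrow> nat set set \<Rightarrow> bool" where
  "triangulation t V n T \<longleftrightarrow>
     (\<forall>S\<in>T. S \<subseteq> V \<and> card S = n + 1) \<and>
     (\<forall>S\<in>T. \<forall>S'\<in>T. conv t n S \<inter> conv t n S' = conv t n (S \<inter> S')) \<and>
     (\<Union>S\<in>T. conv t n S) = conv t n V"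

definition lower_facet :: "nat set \<Rightarrow> nat \<Rightarrow> nat set \<Rightarrow> bool" where
  "lower_facet V n F \<longleftrightarrow> F \<subseteq> V \<and> card F = n \<and>
     (\<forall>w\<in>V - F. even (card {f\<in>F. w < f}))"

definition upper_facet :: "nat set \<Rightarrow> nat \<Rightarrow> nat set \<Rightarrow> bool" where
  "upper_facet V n F \<longleftrightarrow> F \<subseteq> V \<and> card F = n \<and>
     (\<forall>w\<in>V - F. odd (card {f\<in>F. w < f}))"

definition lower_triangulation :: "nat set \<Rightarrow> nat \<Rightarrow> nat set set" where
  "lower_triangulation V n = {F. lower_facet V (n + 1) F}"

definition upper_triangulation :: "nat set \<Rightarrow> nat \<Rightarrow> nat set set" where
  "upper_triangulation V n = {F. upper_facet V (n + 1) F}"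

definition facet :: "nat set \<Rightarrow> nat \<Rightarrow> nat set \<Rightarrow> bool" where
  "facet V n F \<longleftrightarrow> lower_facet V n F \<or> upper_facet V n F"

definition nu :: "nat \<Rightarrow> nat \<Rightarrow> nat set set" where
  "nu m d = {A. A \<subseteq> {1..m} \<and> card A = d + 1 \<and>
                 \<not> (\<exists>F. facet {1..m} (2 * d + 1) F \<and> A \<subseteq> F)}"

definition simp :: "nat \<Rightarrow> nat \<Rightarrow> nat set set \<Rightarrow> nat set set" where
  "simp m d T = {A \<in> nu m d. \<exists>S\<in>T. A \<subseteq> S}"

text \<open>interlace X Y: card Y = card X + 1 and y0 < x0 < y1 < x1 < ... < xk < y(k+1).
  Both "Sigma wr A" and "A wr B" of the paper are instances of this.\<close>
definition interlace :: "nat set \<Rightarrow> nat set \<Rightarrow> bool" where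
  "interlace X Y \<longleftrightarrow> finite X \<and> finite Y \<and> card Y = card X + 1 \<and>
     (\<forall>i < card X. sorted_list_of_set Y ! i < sorted_list_of_set X ! i \<and>
                   sorted_list_of_set X ! i < sorted_list_of_set Y ! (i + 1))"

definition mutable :: "nat \<Rightarrow> nat \<Rightarrow> nat set set \<Rightarrow> nat set \<Rightarrow> bool" where
  "mutable m d T A \<longleftrightarrow> A \<in> simp m d T \<and>
     (\<exists>B. B \<subseteq> {1..m} \<and> card B = d + 2 \<and> interlace A B \<and>
          {S\<in>T. S \<subseteq> A \<union> B} = lower_triangulation (A \<union> B) (2 * d + 1))"

definition support :: "nat \<Rightarrow> nat \<Rightarrow> nat set set \<Rightarrow> nat set \<Rightarrow> nat set \<Rightarrow> bool" where
  "support m d X A \<Sigma> \<longleftrightarrow> \<Sigma> \<subseteq> {1..m} \<and> card \<Sigma> = d \<and> interlace \<Sigma> A \<and>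
     (\<forall>C\<in>nu m d. C \<subseteq> A \<union> \<Sigma> \<longrightarrow> C \<in> X)"

end

theory Submission
  imports Defs "HOL-Computational_Algebra.Polynomial"
begin

text \<open>The internal \<open>d\<close>-simplices of \<open>C(2d+4, 2d+1)\<close> are the sets \<open>internal_simplex d i\<close>
  (\<open>i \<le> d + 1\<close>): the even vertices up to \<open>2i\<close> together with the odd vertices from \<open>2i+3\<close> on.
  For the mutable simplex \<open>A = internal_simplex d k\<close>, the interlacing set \<open>B\<close> misses exactly one
  vertex \<open>e\<close> of the gap \<open>{2k+1, 2k+2}\<close>, and the lower triangulation of \<open>A \<union> B\<close> puts every
  simplex \<open>[2d+4] - {e, b}\<close> with \<open>b \<notin> A\<close> into \<open>T\<close>. Likewise \<open>A \<union> \<Sigma> = [2, 2d+3] - {x}\<close> for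
  some \<open>x\<close> in the same gap.

  Two simplices of a triangulation never contain the two halves of the Radon partition of a
  circuit on the moment curve. For the circuits \<open>[2d+4] - {z}\<close> this shows that no internal
  simplex of \<open>T\<close> contains \<open>e\<close>, and that \<open>e \<in> {1, 2d+4}\<close> would make all simplices of \<open>T\<close>
  lower facets, hence \<open>T\<close> the lower triangulation. If \<open>x \<noteq> e\<close>, some internal simplex through
  \<open>e\<close> lies in \<open>A \<union> \<Sigma>\<close> and so, \<open>\<Sigma>\<close> being a support, in \<open>simp T\<close>, which is impossible. Hence
  \<open>x = e\<close>, and every internal simplex of \<open>T\<close>, avoiding \<open>e\<close>, lies in \<open>A \<union> \<Sigma>\<close>.\<close>

section \<open>Vandermonde identities on the moment curve\<close>

definition node_poly :: "(nat \<Rightarrow> real) \<Rightarrow> nat set \<Rightarrow> real poly" where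
  "node_poly t S = (\<Prod>u\<in>S. [:- t u, 1:])"

lemma poly_node_poly: "poly (node_poly t S) x = (\<Prod>u\<in>S. x - t u)"
  by (simp add: node_poly_def poly_prod)

lemma degree_node_poly: "finite S \<Longrightarrow> degree (node_poly t S) = card S"
  unfolding node_poly_def by (subst degree_prod_sum_eq) auto

lemma coeff_node_poly_card:
  assumes "finite S"
  shows "coeff (node_poly t S) (card S) = 1"
proof -
  have "coeff (node_poly t S) (card S) = lead_coeff (node_poly t S)"
    using degree_node_poly[OF assms] by simp
  also have "\<dots> = 1" unfolding node_poly_def lead_coeff_prod by simp
  finally show ?thesis .
qed

lemma sum_mult_poly_eq_moments:
  fixes t :: "'a \<Rightarrow> real"
  assumes "degree P \<le> N"
  shows "(\<Sum>v\<in>S. f v * poly P (t v)) = (\<Sum>i\<le>N. coeff P i * (\<Sum>v\<in>S. f v * t v ^ i))"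
proof -
  have "poly P x = (\<Sum>i\<le>N. coeff P i * x ^ i)" for x
    by (subst poly_as_sum_of_monoms'[OF assms, symmetric]) (simp add: poly_sum poly_monom)
  then have "(\<Sum>v\<in>S. f v * poly P (t v)) = (\<Sum>v\<in>S. \<Sum>i\<le>N. f v * (coeff P i * t v ^ i))"
    by (simp add: sum_distrib_left)
  also have "\<dots> = (\<Sum>i\<le>N. coeff P i * (\<Sum>v\<in>S. f v * t v ^ i))"
    by (subst sum.swap) (simp add: sum_distrib_left mult_ac)
  finally show ?thesis .
qed

lemma vanishing_moments_imp_zero:
  fixes t \<delta> :: "nat \<Rightarrow> real"
  assumes fin: "finite S" and inj: "inj_on t S" and card: "card S \<le> Suc N"
    and moments: "\<And>j. j \<le> N \<Longrightarrow> (\<Sum>v\<in>S. \<delta> v * t v ^ j) = 0"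
    and w: "w \<in> S"
  shows "\<delta> w = 0"
proof -
  let ?P = "node_poly t (S - {w})"
  have "degree ?P \<le> N" using degree_node_poly[of "S - {w}" t] fin card w by auto
  then have "(\<Sum>v\<in>S. \<delta> v * poly ?P (t v)) = 0"
    using sum_mult_poly_eq_moments[of ?P N \<delta> t S] moments by simp
  moreover have "(\<Sum>v\<in>S. \<delta> v * poly ?P (t v)) = \<delta> w * poly ?P (t w)"
  proof -
    have "poly ?P (t v) = 0" if "v \<in> S - {w}" for v
      using fin that by (auto simp: poly_node_poly intro: prod_zero)
    then show ?thesis by (simp add: sum.remove[OF fin w])
  qed
  moreover have "poly ?P (t w) \<noteq> 0"
    using fin inj w by (auto simp: poly_node_poly inj_on_def)
  ultimately show ?thesis by simp
qed

definition circuit_coeff :: "(nat \<Rightarrow> real) \<Rightarrow> nat set \<Rightarrow> nat \<Rightarrow> real" where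
  "circuit_coeff t Z v = 1 / (\<Prod>u\<in>Z - {v}. t v - t u)"

text \<open>The Lagrange interpolant of \<open>x ^ j\<close> at the nodes \<open>t ` Z\<close> is \<open>x ^ j\<close> itself, and its
  coefficient of degree \<open>card Z - 1 > j\<close> is the sum below.\<close>

lemma circuit_moments_vanish:
  fixes t :: "nat \<Rightarrow> real"
  assumes fin: "finite Z" and inj: "inj_on t Z" and card: "card Z = Suc (Suc N)" and j: "j \<le> N"
  shows "(\<Sum>v\<in>Z. circuit_coeff t Z v * t v ^ j) = 0"
proof -
  define H where "H = (\<Sum>v\<in>Z. smult (circuit_coeff t Z v * t v ^ j) (node_poly t (Z - {v})))"
  have node_nonzero: "(\<Prod>u\<in>Z - {w}. t w - t u) \<noteq> 0" if "w \<in> Z" for w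
    using fin inj that by (auto simp: inj_on_def)
  have "poly H (t w) = t w ^ j" if w: "w \<in> Z" for w
  proof -
    have "poly H (t w) = (\<Sum>v\<in>Z. circuit_coeff t Z v * t v ^ j * (\<Prod>u\<in>Z - {v}. t w - t u))"
      unfolding H_def by (simp add: poly_sum poly_node_poly)
    also have "\<dots> = circuit_coeff t Z w * t w ^ j * (\<Prod>u\<in>Z - {w}. t w - t u)"
    proof -
      have "(\<Prod>u\<in>Z - {v}. t w - t u) = 0" if "v \<in> Z - {w}" for v
        using fin w that by (auto intro: prod_zero)
      then show ?thesis by (simp add: sum.remove[OF fin w])
    qed
    also have "\<dots> = t w ^ j"
      using node_nonzero[OF w] by (simp add: circuit_coeff_def)
    finally show ?thesis .
  qed
  moreover have "degree H \<le> Suc N"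
    unfolding H_def by (rule degree_sum_le[OF fin])
      (use degree_node_poly[of _ t] fin card in \<open>auto intro: order.trans[OF degree_smult_le]\<close>)
  ultimately have "H = monom 1 j"
    using card_image[OF inj] card j degree_monom_le[of "1::real" j]
    by (intro poly_eqI_degree[of "t ` Z"]) (auto simp: poly_monom)
  then have "coeff H (Suc N) = 0" using j by simp
  moreover have "coeff H (Suc N) = (\<Sum>v\<in>Z. circuit_coeff t Z v * t v ^ j)"
  proof -
    have "coeff (node_poly t (Z - {v})) (Suc N) = 1" if "v \<in> Z" for v
      using coeff_node_poly_card[of "Z - {v}" t] fin card that by simp
    then show ?thesis unfolding H_def coeff_sum by simp
  qed
  ultimately show ?thesis by simp
qed

lemma prod_pos_iff_even_card_neg:
  fixes f :: "'a \<Rightarrow> real"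
  assumes "finite S" "\<And>u. u \<in> S \<Longrightarrow> f u \<noteq> 0"
  shows "0 < (\<Prod>u\<in>S. f u) \<longleftrightarrow> even (card {u\<in>S. f u < 0})"
  using assms
proof (induction S rule: finite_induct)
  case (insert x F)
  have "(\<Prod>u\<in>F. f u) \<noteq> 0" "f x \<noteq> 0" using insert by auto
  then have "(\<Prod>u\<in>F. f u) < 0 \<longleftrightarrow> \<not> 0 < (\<Prod>u\<in>F. f u)" "f x < 0 \<longleftrightarrow> \<not> 0 < f x"
    by linarith+
  moreover have "card {u \<in> insert x F. f u < 0} =
      (if f x < 0 then Suc (card {u\<in>F. f u < 0}) else card {u\<in>F. f u < 0})"
  proof -
    have "{u \<in> insert x F. f u < 0} =
        (if f x < 0 then insert x {u\<in>F. f u < 0} else {u\<in>F. f u < 0})"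
      by auto
    then show ?thesis using insert by simp
  qed
  ultimately show ?case using insert by (auto simp: zero_less_mult_iff)
qed simp

lemma prod_diff_pos_iff:
  fixes t :: "nat \<Rightarrow> real"
  assumes mono: "strict_mono_on V t" and "S \<subseteq> V" "finite S" "v \<in> V" "v \<notin> S"
  shows "0 < (\<Prod>u\<in>S. t v - t u) \<longleftrightarrow> even (card {u\<in>S. v < u})"
proof -
  have "t v - t u \<noteq> 0" if "u \<in> S" for u
    using assms that inj_onD[OF strict_mono_on_imp_inj_on[OF mono], of v u] by auto
  moreover have "{u\<in>S. t v - t u < 0} = {u\<in>S. v < u}"
    using assms by (auto simp: strict_mono_on_less[OF mono])
  ultimately show ?thesis
    using prod_pos_iff_even_card_neg[OF \<open>finite S\<close>, of "\<lambda>u. t v - t u"] by simp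
qed

lemma circuit_coeff_pos_iff:
  fixes t :: "nat \<Rightarrow> real"
  assumes mono: "strict_mono_on Z t" and fin: "finite Z" and v: "v \<in> Z"
  shows "0 < circuit_coeff t Z v \<longleftrightarrow> even (card {u\<in>Z. v < u})"
proof -
  have "{u\<in>Z - {v}. v < u} = {u\<in>Z. v < u}" by auto
  then show ?thesis
    using prod_diff_pos_iff[OF mono, of "Z - {v}" v] fin v by (simp add: circuit_coeff_def)
qed

lemma circuit_coeff_nonzero:
  fixes t :: "nat \<Rightarrow> real"
  assumes mono: "strict_mono_on Z t" and "finite Z" "v \<in> Z"
  shows "circuit_coeff t Z v \<noteq> 0"
  using assms inj_onD[OF strict_mono_on_imp_inj_on[OF mono], of v]
  by (auto simp: circuit_coeff_def)

section \<open>Radon partitions and lifting\<close>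

abbreviation bary :: "(nat \<Rightarrow> real) \<Rightarrow> nat \<Rightarrow> (nat \<Rightarrow> real) \<Rightarrow> nat set \<Rightarrow> nat \<Rightarrow> real" where
  "bary t n u S \<equiv> (\<lambda>k. \<Sum>v\<in>S. u v * cpt t n v k)"

lemma bary_in_conv:
  assumes "finite S" "W \<subseteq> S" "\<forall>v\<in>W. 0 \<le> u v" "sum u W = 1"
  shows "bary t n u W \<in> conv t n S"
  unfolding conv_def
  by (rule CollectI, rule exI[of _ "\<lambda>v. if v \<in> W then u v else 0"])
    (use assms in \<open>auto simp: if_distrib[of "\<lambda>x. x * _"] sum.If_cases Int_absorb1\<close>)

lemma bary_eq_imp_moments_eq:
  fixes t :: "nat \<Rightarrow> real"
  assumes eq: "bary t n u S = bary t n w S'" and "sum u S = 1" "sum w S' = 1" and j: "j \<le> n"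
  shows "(\<Sum>v\<in>S. u v * t v ^ j) = (\<Sum>v\<in>S'. w v * t v ^ j)"
proof (cases j)
  case (Suc k)
  with j have "k < n" by simp
  with fun_cong[OF eq, of k] show ?thesis
    unfolding Suc cpt_def by (simp add: mult_ac)
qed (use assms in simp)

lemma bary_support_unique:
  fixes t :: "nat \<Rightarrow> real"
  assumes fin: "finite S" and inj: "inj_on t S" and card: "card S \<le> Suc n"
    and W: "W \<subseteq> S" "\<forall>v\<in>W. 0 < u v" "sum u W = 1"
    and W': "W' \<subseteq> S" "sum w W' = 1"
    and eq: "bary t n u W = bary t n w W'"
  shows "W \<subseteq> W'"
proof
  fix v assume v: "v \<in> W"
  define \<delta> where "\<delta> = (\<lambda>v. (if v \<in> W then u v else 0) - (if v \<in> W' then w v else 0))"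
  have "\<delta> v = 0"
  proof (rule vanishing_moments_imp_zero[OF fin inj card])
    fix j assume "j \<le> n"
    from bary_eq_imp_moments_eq[OF eq W(3) W'(2) this]
    show "(\<Sum>v\<in>S. \<delta> v * t v ^ j) = 0"
      using fin W W' by (simp add: \<delta>_def left_diff_distrib sum_subtractf
          if_distrib[of "\<lambda>x. x * _"] sum.If_cases Int_absorb1)
  qed (use v W in auto)
  then show "v \<in> W'" using v W(2) by (auto simp: \<delta>_def split: if_splits)
qed

definition radon_odd :: "nat set \<Rightarrow> nat set" where
  "radon_odd Z = {v\<in>Z. odd (card {u\<in>Z. v < u})}"

definition radon_even :: "nat set \<Rightarrow> nat set" where
  "radon_even Z = {v\<in>Z. even (card {u\<in>Z. v < u})}"

lemma radon_halves: "radon_odd Z \<union> radon_even Z = Z" "radon_odd Z \<inter> radon_even Z = {}"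
  by (auto simp: radon_odd_def radon_even_def)

lemma Max_in_radon_even:
  assumes "finite Z" "Z \<noteq> {}"
  shows "Max Z \<in> radon_even Z"
proof -
  have "{u\<in>Z. Max Z < u} = {}" using Max_ge[OF assms(1)] leD by blast
  then have "card {u\<in>Z. Max Z < u} = 0" by (simp only: card.empty)
  then show ?thesis using Max_in[OF assms] by (simp add: radon_even_def)
qed

lemma circuit_coeff_sign_radon:
  fixes t :: "nat \<Rightarrow> real"
  assumes "strict_mono_on Z t" "finite Z"
  shows "v \<in> radon_even Z \<Longrightarrow> 0 < circuit_coeff t Z v"
    and "v \<in> radon_odd Z \<Longrightarrow> circuit_coeff t Z v < 0"
  using circuit_coeff_pos_iff[OF assms] circuit_coeff_nonzero[OF assms]
  by (auto simp: radon_even_def radon_odd_def) (meson linorder_neqE_linordered_idom)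

lemma circuit_radon_moments:
  fixes t :: "nat \<Rightarrow> real"
  assumes mono: "strict_mono_on Z t" and fin: "finite Z" and card: "card Z = Suc (Suc n)"
    and j: "j \<le> n"
  shows "(\<Sum>v\<in>radon_even Z. circuit_coeff t Z v * t v ^ j) =
    (\<Sum>v\<in>radon_odd Z. - circuit_coeff t Z v * t v ^ j)"
proof -
  have "finite (radon_odd Z)" "finite (radon_even Z)"
    using fin by (auto simp: radon_odd_def radon_even_def)
  from sum.union_disjoint[OF this radon_halves(2), unfolded radon_halves(1)]
  have "(\<Sum>v\<in>radon_odd Z. circuit_coeff t Z v * t v ^ j) +
      (\<Sum>v\<in>radon_even Z. circuit_coeff t Z v * t v ^ j) = 0"
    using circuit_moments_vanish[OF fin strict_mono_on_imp_inj_on[OF mono] card j] by metis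
  then show ?thesis by (simp add: sum_negf add_eq_0_iff)
qed

text \<open>Normalising the coefficients of the affine dependence of the \<open>n + 2\<close> points gives the
  Radon partition of a circuit on the moment curve into alternate vertices.\<close>

lemma moment_curve_radon:
  fixes t :: "nat \<Rightarrow> real"
  assumes mono: "strict_mono_on Z t" and fin: "finite Z" and card: "card Z = Suc (Suc n)"
  obtains w where "\<forall>v\<in>Z. 0 < w v" "sum w (radon_even Z) = 1" "sum w (radon_odd Z) = 1"
    "bary t n w (radon_even Z) = bary t n w (radon_odd Z)"
proof -
  let ?X = "radon_odd Z" and ?Y = "radon_even Z"
  define c where "c = circuit_coeff t Z"
  note sign = circuit_coeff_sign_radon[OF mono fin, folded c_def]
  note moments = circuit_radon_moments[OF mono fin card, folded c_def]
  define s where "s = sum c ?Y"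
  have "Max Z \<in> ?Y" by (rule Max_in_radon_even[OF fin]) (use card in auto)
  then have s: "0 < s" unfolding s_def
    by (intro sum_pos) (use fin sign(1) in \<open>auto simp: radon_even_def\<close>)
  define w where "w v = \<bar>c v\<bar> / s" for v
  have sumY: "(\<Sum>v\<in>?Y. w v * f v) = (\<Sum>v\<in>?Y. c v * f v) / s" for f
    unfolding sum_divide_distrib by (intro sum.cong) (simp_all add: w_def sign(1) abs_of_pos)
  have sumX: "(\<Sum>v\<in>?X. w v * f v) = (\<Sum>v\<in>?X. - c v * f v) / s" for f
    unfolding sum_divide_distrib by (intro sum.cong) (simp_all add: w_def sign(2) abs_of_neg)
  show ?thesis
  proof
    show "\<forall>v\<in>Z. 0 < w v"
      using s circuit_coeff_nonzero[OF mono fin] by (simp add: w_def c_def)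
    show "sum w ?Y = 1" using sumY[of "\<lambda>_. 1"] s by (simp add: s_def)
    show "sum w ?X = 1" using sumX[of "\<lambda>_. 1"] moments[of 0] s by (simp add: s_def)
    show "bary t n w ?Y = bary t n w ?X"
    proof
      fix k
      show "bary t n w ?Y k = bary t n w ?X k"
        using moments[of "Suc k"] by (cases "k < n") (simp_all add: sumY sumX cpt_def)
    qed
  qed
qed

text \<open>The Radon point lies in both simplices, hence in their common face; uniqueness of
  barycentric coordinates in \<open>R'\<close> then puts the even half into \<open>R\<close> as well, so \<open>R\<close> would
  contain all \<open>n + 2\<close> points of \<open>Z\<close>.\<close>

lemma triangulation_no_radon_split:
  fixes t :: "nat \<Rightarrow> real"
  assumes mono: "strict_mono_on V t" and finV: "finite V" and tri: "triangulation t V n T"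
    and Z: "Z \<subseteq> V" "card Z = Suc (Suc n)"
    and R: "R \<in> T" "radon_odd Z \<subseteq> R" and R': "R' \<in> T" "radon_even Z \<subseteq> R'"
  shows False
proof -
  have monoZ: "strict_mono_on Z t" using mono Z(1) by (rule monotone_on_subset)
  obtain w where w: "\<forall>v\<in>Z. 0 < w v" "sum w (radon_even Z) = 1" "sum w (radon_odd Z) = 1"
    and radon: "bary t n w (radon_even Z) = bary t n w (radon_odd Z)"
    using moment_curve_radon[OF monoZ finite_subset[OF Z(1) finV] Z(2)] by blast
  have halves: "radon_odd Z \<subseteq> Z" "radon_even Z \<subseteq> Z" "radon_odd Z \<union> radon_even Z = Z"
    using radon_halves(1) by auto
  have RV: "R \<subseteq> V" "R' \<subseteq> V" and card: "card R = Suc n" "card R' = Suc n"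
    using tri R(1) R'(1) by (auto simp: triangulation_def)
  have fin: "finite R" "finite R'" using RV finV finite_subset by auto
  let ?p = "bary t n w (radon_even Z)"
  have "?p \<in> conv t n R" unfolding radon
    by (rule bary_in_conv) (use fin R w halves(1) in \<open>auto intro: less_imp_le\<close>)
  moreover have "?p \<in> conv t n R'"
    by (rule bary_in_conv) (use fin R' w halves(2) in \<open>auto intro: less_imp_le\<close>)
  moreover have "conv t n R \<inter> conv t n R' = conv t n (R \<inter> R')"
    using tri R(1) R'(1) by (simp add: triangulation_def)
  ultimately have "?p \<in> conv t n (R \<inter> R')" by blast
  then obtain \<mu> where \<mu>: "sum \<mu> (R \<inter> R') = 1" "?p = bary t n \<mu> (R \<inter> R')"
    unfolding conv_def by blast
  have injR': "inj_on t R'" using strict_mono_on_imp_inj_on[OF mono] RV(2) by (rule inj_on_subset)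
  have "\<forall>v\<in>radon_even Z. 0 < w v" using w(1) halves(2) by blast
  then have "radon_even Z \<subseteq> R \<inter> R'"
    using bary_support_unique[OF fin(2) injR' _ R'(2) _ w(2) Int_lower2 \<mu>] card(2) by simp
  then have "radon_odd Z \<union> radon_even Z \<subseteq> R" using R(2) by blast
  then have "Z \<subseteq> R" by (simp only: halves(3))
  then have "card Z \<le> card R" by (rule card_mono[OF fin(1)])
  then show False using card Z(2) by simp
qed

text \<open>Lifting: \<open>poly (node_poly t R)\<close> differs from \<open>x ^ Suc n\<close> by a polynomial of degree
  \<open>\<le> n\<close>, and for a lower facet \<open>R\<close> it is nonnegative on \<open>t ` V\<close> with zero set \<open>R\<close>; so it
  measures the height of a point above the lower hull spanned by \<open>R\<close>.\<close>

lemma node_poly_lower_facet: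
  fixes t :: "nat \<Rightarrow> real"
  assumes mono: "strict_mono_on V t" and R: "lower_facet V n R" "finite R" and v: "v \<in> V"
  shows "0 \<le> poly (node_poly t R) (t v)" and "poly (node_poly t R) (t v) = 0 \<longleftrightarrow> v \<in> R"
proof -
  have pos: "0 < poly (node_poly t R) (t v)" if "v \<notin> R"
    using prod_diff_pos_iff[OF mono _ R(2) v that] R(1) v that
    by (simp add: poly_node_poly lower_facet_def)
  have zero: "poly (node_poly t R) (t v) = 0" if "v \<in> R"
    using R(2) that by (auto simp: poly_node_poly intro: prod_zero)
  show "0 \<le> poly (node_poly t R) (t v)" using pos zero by force
  show "poly (node_poly t R) (t v) = 0 \<longleftrightarrow> v \<in> R" using pos zero by force
qed

lemma bary_eq_imp_node_poly_diff:
  fixes t :: "nat \<Rightarrow> real"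
  assumes R: "finite R" "card R = Suc n"
    and eq: "bary t n u S = bary t n w S'" and u: "sum u S = 1" and w: "sum w S' = 1"
  shows "(\<Sum>v\<in>S. u v * poly (node_poly t R) (t v)) - (\<Sum>v\<in>S'. w v * poly (node_poly t R) (t v))
     = (\<Sum>v\<in>S. u v * t v ^ Suc n) - (\<Sum>v\<in>S'. w v * t v ^ Suc n)"
proof -
  let ?P = "node_poly t R"
  have deg: "degree ?P \<le> Suc n" using degree_node_poly[OF R(1)] R(2) by simp
  have "(\<Sum>v\<in>S. u v * poly ?P (t v)) - (\<Sum>v\<in>S'. w v * poly ?P (t v))
     = (\<Sum>i\<le>Suc n. coeff ?P i * ((\<Sum>v\<in>S. u v * t v ^ i) - (\<Sum>v\<in>S'. w v * t v ^ i)))"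
    unfolding sum_mult_poly_eq_moments[OF deg] by (simp add: sum_subtractf right_diff_distrib)
  also have "\<dots> = coeff ?P (Suc n) * ((\<Sum>v\<in>S. u v * t v ^ Suc n) - (\<Sum>v\<in>S'. w v * t v ^ Suc n))"
    using bary_eq_imp_moments_eq[OF eq u w] by (simp add: sum.atMost_Suc)
  finally show ?thesis using coeff_node_poly_card[OF R(1)] R(2) by simp
qed

lemma lower_facets_bary_subset:
  fixes t :: "nat \<Rightarrow> real"
  assumes mono: "strict_mono_on V t"
    and R: "lower_facet V (Suc n) R" "finite R" and S: "lower_facet V (Suc n) S" "finite S"
    and l: "\<forall>v\<in>R. 0 < l v" "sum l R = 1" and m: "\<forall>v\<in>S. 0 \<le> m v" "sum m S = 1"
    and eq: "bary t n l R = bary t n m S"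
  shows "R \<subseteq> S"
proof -
  have RV: "R \<subseteq> V" "card R = Suc n" and SV: "S \<subseteq> V" "card S = Suc n"
    using R(1) S(1) by (auto simp: lower_facet_def)
  note hR = node_poly_lower_facet[OF mono R] and hS = node_poly_lower_facet[OF mono S]
  define height where "height P u W = (\<Sum>v\<in>W. u v * poly (node_poly t P) (t v))" for P u W
  have "height R l R = 0"
    unfolding height_def by (intro sum.neutral ballI) (simp add: hR(2) subsetD[OF RV(1)])
  moreover have "height S m S = 0"
    unfolding height_def by (intro sum.neutral ballI) (simp add: hS(2) subsetD[OF SV(1)])
  moreover have "0 \<le> height R m S"
    unfolding height_def by (intro sum_nonneg mult_nonneg_nonneg) (use hR(1) SV(1) m(1) in auto)
  moreover have nonneg: "0 \<le> l v * poly (node_poly t S) (t v)" if "v \<in> R" for v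
    using hS(1) RV(1) l(1) that by (intro mult_nonneg_nonneg) (auto intro: less_imp_le)
  then have "0 \<le> height S l R" unfolding height_def by (intro sum_nonneg)
  \<comment> \<open>Both height differences equal the difference of the \<open>Suc n\<close>-th moments.\<close>
  moreover note bary_eq_imp_node_poly_diff[OF R(2) RV(2) eq[symmetric] m(2) l(2), folded height_def]
    and bary_eq_imp_node_poly_diff[OF S(2) SV(2) eq l(2) m(2), folded height_def]
  ultimately have "height S l R = 0" by linarith
  then have zero: "\<forall>v\<in>R. l v * poly (node_poly t S) (t v) = 0"
    using sum_nonneg_eq_0_iff[OF R(2) nonneg] unfolding height_def by simp
  show ?thesis
  proof
    fix v assume "v \<in> R"
    then have "poly (node_poly t S) (t v) = 0" using zero l(1) by force
    then show "v \<in> S" using hS(2) RV(1) \<open>v \<in> R\<close> by blast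
  qed
qed

lemma triangulation_eq_lower_triangulation:
  fixes t :: "nat \<Rightarrow> real"
  assumes mono: "strict_mono_on V t" and finV: "finite V" and tri: "triangulation t V n T"
    and lower: "\<forall>R\<in>T. lower_facet V (Suc n) R"
  shows "T = lower_triangulation V n"
proof (intro set_eqI iffI)
  fix R assume "R \<in> T"
  then show "R \<in> lower_triangulation V n" using lower by (simp add: lower_triangulation_def)
next
  fix R assume "R \<in> lower_triangulation V n"
  then have R: "lower_facet V (Suc n) R" "finite R" "R \<subseteq> V" "card R = Suc n"
    using finV finite_subset by (auto simp: lower_triangulation_def lower_facet_def)
  define l :: "nat \<Rightarrow> real" where "l v = 1 / real (Suc n)" for v
  have l: "\<forall>v\<in>R. 0 < l v" "sum l R = 1" using R(4) by (auto simp: l_def)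
  have "bary t n l R \<in> conv t n V"
    by (rule bary_in_conv) (use finV R(3) l in \<open>auto intro: less_imp_le\<close>)
  then have "bary t n l R \<in> (\<Union>S\<in>T. conv t n S)" using tri by (simp add: triangulation_def)
  then obtain S where S: "S \<in> T" "bary t n l R \<in> conv t n S" by blast
  then obtain m where m: "\<forall>v\<in>S. 0 \<le> m v" "sum m S = 1" "bary t n l R = bary t n m S"
    unfolding conv_def by blast
  have S': "lower_facet V (Suc n) S" "S \<subseteq> V" "card S = Suc n"
    using lower S(1) by (auto simp: lower_facet_def)
  have "finite S" using S'(2) finV by (rule finite_subset)
  have "R \<subseteq> S" by (rule lower_facets_bary_subset[OF mono R(1,2) S'(1) \<open>finite S\<close> l m])
  then have "R = S" using card_subset_eq[OF \<open>finite S\<close>] R(4) S'(3) by simp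
  then show "R \<in> T" using S(1) by simp
qed

section \<open>Counting and interlacing\<close>

lemma card_even_Icc: "card {v\<in>{a..b::nat}. even v} = (b + 2) div 2 - (a + 1) div 2"
proof -
  have "{v\<in>{a..b}. even v} = (\<lambda>j. 2 * j) ` {(a + 1) div 2..b div 2}"
    by (auto simp: image_iff elim!: evenE)
  then show ?thesis by (simp add: card_image inj_on_def)
qed

lemma card_odd_Icc: "card {v\<in>{a..b::nat}. odd v} = (b + 1) div 2 - a div 2"
proof -
  have "{v\<in>{a..b}. odd v} = (\<lambda>j. 2 * j + 1) ` {a div 2..<(b + 1) div 2}"
    by (auto simp: image_iff elim!: oddE)
  then show ?thesis by (simp add: card_image inj_on_def)
qed

lemma card_eq_2_sorted:
  fixes D :: "nat set"
  assumes "card D = 2"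
  obtains u v where "D = {u, v}" "u < v"
proof -
  have "finite D" using assms by (metis card.infinite zero_neq_numeral)
  then have D: "D = set (sorted_list_of_set D)" by simp
  have "length (sorted_list_of_set D) = 2" using assms by simp
  then obtain a b where ab: "sorted_list_of_set D = [a, b]"
    by (metis (no_types, lifting) length_0_conv length_Suc_conv numeral_2_eq_2)
  have "sorted_wrt (<) (sorted_list_of_set D)" by simp
  then show ?thesis using that D ab by auto
qed

lemma card_eq_3_sorted:
  fixes D :: "nat set"
  assumes "card D = 3"
  obtains u v w where "D = {u, v, w}" "u < v" "v < w"
proof -
  have "finite D" using assms by (metis card.infinite zero_neq_numeral)
  then have D: "D = set (sorted_list_of_set D)" by simp
  have "length (sorted_list_of_set D) = 3" using assms by simp
  then obtain a b c where abc: "sorted_list_of_set D = [a, b, c]"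
    by (metis (no_types, lifting) length_0_conv length_Suc_conv numeral_3_eq_3)
  have "sorted_wrt (<) (sorted_list_of_set D)" by simp
  then show ?thesis using that D abc by auto
qed

lemma subset_card_eq_Diff_singleton:
  assumes "S \<subseteq> I" "card S + 1 = card I" "finite I"
  obtains e where "e \<in> I" "S = I - {e}"
proof -
  have "card (I - S) = 1" using assms by (simp add: card_Diff_subset finite_subset)
  then obtain e where "I - S = {e}" by (auto simp: card_Suc_eq)
  then show ?thesis using that assms(1) by blast
qed

lemma card_less_sorted_nth:
  fixes S :: "nat set"
  assumes fin: "finite S" and j: "j \<le> card S"
    and below: "0 < j \<Longrightarrow> sorted_list_of_set S ! (j - 1) < c"
    and above: "j < card S \<Longrightarrow> c \<le> sorted_list_of_set S ! j"
  shows "card {s\<in>S. s < c} = j"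
proof -
  let ?xs = "sorted_list_of_set S"
  have sorted: "sorted ?xs" and len: "length ?xs = card S" and distinct: "distinct ?xs" by simp_all
  have "{s\<in>S. s < c} = (\<lambda>i. ?xs ! i) ` {..<j}"
  proof (intro set_eqI iffI)
    fix s assume "s \<in> {s\<in>S. s < c}"
    then obtain i where i: "i < card S" "s = ?xs ! i" "s < c"
      using fin by (metis (no_types, lifting) in_set_conv_nth len mem_Collect_eq set_sorted_list_of_set)
    have "i < j"
    proof (rule ccontr)
      assume "\<not> i < j"
      then have "j < card S" using i(1) by simp
      then have "c \<le> ?xs ! j" by (rule above)
      also have "?xs ! j \<le> ?xs ! i" using sorted_nth_mono[OF sorted] \<open>\<not> i < j\<close> i(1) len by simp
      finally show False using i(2,3) by simp
    qed
    then show "s \<in> (\<lambda>i. ?xs ! i) ` {..<j}" using i by blast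
  next
    fix s assume "s \<in> (\<lambda>i. ?xs ! i) ` {..<j}"
    then obtain i where i: "i < j" "s = ?xs ! i" by blast
    have "?xs ! i \<le> ?xs ! (j - 1)" using sorted_nth_mono[OF sorted] i(1) j len by simp
    moreover have "?xs ! i \<in> S" using i(1) j len fin by (metis nth_mem order_less_le_trans set_sorted_list_of_set)
    ultimately show "s \<in> {s\<in>S. s < c}" using below i by fastforce
  qed
  moreover have "inj_on (\<lambda>i. ?xs ! i) {..<j}"
    using distinct j len by (auto simp: inj_on_def nth_eq_iff_index_eq)
  ultimately show ?thesis by (simp add: card_image)
qed

lemma sorted_list_of_set_nth_in:
  "finite S \<Longrightarrow> i < card S \<Longrightarrow> sorted_list_of_set S ! i \<in> S"
  by (metis nth_mem length_sorted_list_of_set set_sorted_list_of_set)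

lemma obtain_sorted_list_of_set_nth:
  assumes "finite S" "x \<in> S"
  obtains i where "i < card S" "x = sorted_list_of_set S ! i"
  using assms by (metis in_set_conv_nth length_sorted_list_of_set set_sorted_list_of_set)

lemma card_less_sorted_list_of_set_nth:
  fixes S :: "nat set"
  assumes "finite S" "i < card S"
  shows "card {s\<in>S. s < sorted_list_of_set S ! i} = i"
proof (rule card_less_sorted_nth[OF assms(1)])
  have "sorted_wrt (<) (sorted_list_of_set S)" by simp
  then show "sorted_list_of_set S ! (i - 1) < sorted_list_of_set S ! i" if "0 < i"
    using assms(2) that by (simp add: sorted_wrt_nth_less)
qed (use assms in auto)

lemma interlaceD:
  assumes "interlace X Y"
  shows "finite X" "finite Y" "card Y = card X + 1"
    and "\<And>i. i < card X \<Longrightarrow> sorted_list_of_set Y ! i < sorted_list_of_set X ! i"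
    and "\<And>i. i < card X \<Longrightarrow> sorted_list_of_set X ! i < sorted_list_of_set Y ! (i + 1)"
  using assms unfolding interlace_def by auto

lemma interlace_card_less_fst:
  assumes il: "interlace X Y" and x: "x \<in> X"
  shows "card {y\<in>Y. y < x} = card {x'\<in>X. x' < x} + 1"
proof -
  note I = interlaceD[OF il]
  obtain i where i: "i < card X" "x = sorted_list_of_set X ! i"
    using obtain_sorted_list_of_set_nth[OF I(1) x] .
  have "card {y\<in>Y. y < x} = i + 1"
    using I(3) I(4)[of i] I(5)[of i] i by (intro card_less_sorted_nth[OF I(2)]) auto
  then show ?thesis using card_less_sorted_list_of_set_nth[OF I(1) i(1)] i(2) by simp
qed

lemma interlace_card_less_snd:
  assumes il: "interlace X Y" and y: "y \<in> Y"
  shows "card {y'\<in>Y. y' < y} = card {x\<in>X. x < y}"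
proof -
  note I = interlaceD[OF il]
  obtain i where i: "i < card Y" "y = sorted_list_of_set Y ! i"
    using obtain_sorted_list_of_set_nth[OF I(2) y] .
  have "card {x\<in>X. x < y} = i"
    using I(3) I(5)[of "i - 1"] I(4)[of i] i by (intro card_less_sorted_nth[OF I(1)]) auto
  then show ?thesis using card_less_sorted_list_of_set_nth[OF I(2) i(1)] i(2) by simp
qed

lemma interlace_disjoint: "interlace X Y \<Longrightarrow> X \<inter> Y = {}"
  using interlace_card_less_fst interlace_card_less_snd by force

lemma card_less_Un_disjoint:
  assumes "finite X" "finite Y" "X \<inter> Y = {}"
  shows "card {u\<in>X \<union> Y. u < a} = card {x\<in>X. x < a} + card {y\<in>Y. y < a}"
proof -
  have "{u\<in>X \<union> Y. u < a} = {x\<in>X. x < a} \<union> {y\<in>Y. y < a}" by auto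
  then show ?thesis using assms by (simp add: card_Un_disjoint disjoint_iff)
qed

lemma interlace_card_less_union_fst:
  assumes il: "interlace X Y" and a: "a \<in> X"
  shows "card {u\<in>X \<union> Y. u < a} = 2 * card {x\<in>X. x < a} + 1"
  using card_less_Un_disjoint[OF interlaceD(1,2)[OF il] interlace_disjoint[OF il]]
    interlace_card_less_fst[OF il a] by simp

lemma interlace_card_less_union_snd:
  assumes il: "interlace X Y" and a: "a \<in> Y"
  shows "card {u\<in>X \<union> Y. u < a} = 2 * card {y\<in>Y. y < a}"
  using card_less_Un_disjoint[OF interlaceD(1,2)[OF il] interlace_disjoint[OF il]]
    interlace_card_less_snd[OF il a] by simp

lemma interlace_between:
  assumes il: "interlace X Y" and x: "x \<in> X"
  shows "\<exists>y\<in>Y. y < x" and "\<exists>y\<in>Y. x < y"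
proof -
  note I = interlaceD[OF il]
  obtain i where i: "i < card X" "x = sorted_list_of_set X ! i"
    using obtain_sorted_list_of_set_nth[OF I(1) x] .
  show "\<exists>y\<in>Y. y < x"
    using I(4)[OF i(1)] sorted_list_of_set_nth_in[OF I(2), of i] I(3) i by auto
  show "\<exists>y\<in>Y. x < y"
    using I(5)[OF i(1)] sorted_list_of_set_nth_in[OF I(2), of "i + 1"] I(3) i by auto
qed

lemma interlace_even_card_greater:
  assumes il: "interlace X Y" and y: "y \<in> Y"
  shows "even (card {u\<in>X \<union> Y. y < u})"
proof -
  note I = interlaceD[OF il]
  let ?U = "X \<union> Y"
  have fin: "finite ?U" using I(1,2) by simp
  have split: "insert y ({u\<in>?U. y < u} \<union> {u\<in>?U. u < y}) = ?U" using y by auto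
  have "card (insert y ({u\<in>?U. y < u} \<union> {u\<in>?U. u < y})) =
      Suc (card ({u\<in>?U. y < u} \<union> {u\<in>?U. u < y}))"
    by (rule card_insert_disjoint) (use fin in auto)
  also have "\<dots> = card {u\<in>?U. y < u} + card {u\<in>?U. u < y} + 1"
    by (subst card_Un_disjoint) (use fin in auto)
  finally have "card ?U = card {u\<in>?U. y < u} + card {u\<in>?U. u < y} + 1"
    by (simp only: split)
  moreover have "card ?U = 2 * card X + 1"
    using card_Un_disjoint[OF I(1,2) interlace_disjoint[OF il]] I(3) by simp
  ultimately show ?thesis using interlace_card_less_union_snd[OF il y] by presburger
qed

lemma interlace_Diff_in_lower_triangulation:
  assumes il: "interlace A B" and b: "b \<in> B" and card: "card A = d + 1"
  shows "(A \<union> B) - {b} \<in> lower_triangulation (A \<union> B) (2*d+1)"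
proof -
  note I = interlaceD[OF il]
  have "card (A \<union> B) = 2*d+3"
    using card_Un_disjoint[OF I(1,2) interlace_disjoint[OF il]] I(3) card by simp
  then have "card ((A \<union> B) - {b}) = 2*d+2" using b I(1,2) by simp
  moreover have "(A \<union> B) - ((A \<union> B) - {b}) = {b}" "{f\<in>(A \<union> B) - {b}. b < f} = {u\<in>A \<union> B. b < u}"
    using b by auto
  ultimately show ?thesis
    unfolding lower_triangulation_def lower_facet_def
    using interlace_even_card_greater[OF il b] by auto
qed

section \<open>Facets and internal simplices of C(2d+4, 2d+1)\<close>

lemma card_above_in_complement3:
  assumes "1 \<le> u" "u < v" "v < w" "w \<le> m"
  shows "card {f\<in>{1..m} - {u, v, w}. w < f} = m - w"
    and "card {f\<in>{1..m} - {u, v, w}. v < f} = m - v - 1"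
    and "card {f\<in>{1..m} - {u, v, w}. u < f} = m - u - 2"
proof -
  have above: "{f\<in>{1..m} - {u, v, w}. x < f} = {Suc x..m} - {u, v, w}" for x by auto
  have "{Suc w..m} \<inter> {u, v, w} = {}" "{Suc v..m} \<inter> {u, v, w} = {w}"
    "{Suc u..m} \<inter> {u, v, w} = {v, w}" using assms by auto
  then show "card {f\<in>{1..m} - {u, v, w}. w < f} = m - w"
    and "card {f\<in>{1..m} - {u, v, w}. v < f} = m - v - 1"
    and "card {f\<in>{1..m} - {u, v, w}. u < f} = m - u - 2"
    unfolding above using assms by (simp_all add: card_Diff_subset_Int)
qed

text \<open>By Gale evenness, the facets of \<open>C(2d+4, 2d+1)\<close> omit three vertices of alternating
  parity: even-odd-even for lower facets, odd-even-odd for upper ones.\<close>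

lemma facet_imp_alternating:
  assumes F: "facet {1..2*d+4} (2*d+1) F"
  obtains u v w where "F = {1..2*d+4} - {u, v, w}" "1 \<le> u" "u < v" "v < w" "w \<le> 2*d+4"
    "even u \<noteq> even v" "even v \<noteq> even w"
proof -
  let ?m = "2*d+4"
  have FV: "F \<subseteq> {1..?m}" "card F = 2*d+1"
    using F by (auto simp: facet_def lower_facet_def upper_facet_def)
  then have "card ({1..?m} - F) = 3" by (simp add: card_Diff_subset finite_subset)
  then obtain u v w where D: "{1..?m} - F = {u, v, w}" and uvw: "u < v" "v < w"
    by (rule card_eq_3_sorted)
  have Fuvw: "F = {1..?m} - {u, v, w}" and range: "1 \<le> u" "w \<le> ?m" using D FV by auto
  note cards = card_above_in_complement3[OF range(1) uvw range(2)]
  have "even u \<noteq> even v \<and> even v \<noteq> even w"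
  proof (cases "lower_facet {1..?m} (2*d+1) F")
    case True
    then have "even (card {f\<in>F. w < f})" "even (card {f\<in>F. v < f})" "even (card {f\<in>F. u < f})"
      unfolding lower_facet_def using D by auto
    then show ?thesis unfolding Fuvw using cards range uvw by (simp; presburger)
  next
    case False
    then have "upper_facet {1..?m} (2*d+1) F" using F by (simp add: facet_def)
    then have "odd (card {f\<in>F. w < f})" "odd (card {f\<in>F. v < f})" "odd (card {f\<in>F. u < f})"
      unfolding upper_facet_def using D by auto
    then show ?thesis unfolding Fuvw using cards range uvw by (simp; presburger)
  qed
  then show ?thesis using that Fuvw range uvw by blast
qed

lemma alternating_imp_facet:
  assumes "1 \<le> u" "u < v" "v < w" "w \<le> 2*d+4" "even u \<noteq> even v" "even v \<noteq> even w"
  shows "facet {1..2*d+4} (2*d+1) ({1..2*d+4} - {u, v, w})"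
proof -
  let ?m = "2*d+4" and ?F = "{1..2*d+4} - {u, v, w}"
  have D: "{1..?m} - ?F = {u, v, w}" and card: "card ?F = 2*d+1"
    using assms by (auto simp: card_Diff_subset)
  note cards = card_above_in_complement3[OF assms(1-4)]
  show ?thesis
  proof (cases "even u")
    case True
    then have "lower_facet {1..?m} (2*d+1) ?F"
      unfolding lower_facet_def D using assms cards card by (auto; presburger)
    then show ?thesis by (simp add: facet_def)
  next
    case False
    then have "upper_facet {1..?m} (2*d+1) ?F"
      unfolding upper_facet_def D using assms cards card by (auto; presburger)
    then show ?thesis by (simp add: facet_def)
  qed
qed

lemma lower_facet_Diff2:
  assumes "1 \<le> p" "p < q" "q \<le> 2*d+4" "odd p" "even q"
  shows "lower_facet {1..2*d+4} (2*d+2) ({1..2*d+4} - {p, q})"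
proof -
  let ?m = "2*d+4"
  have above: "{f\<in>{1..?m} - {p, q}. x < f} = {Suc x..?m} - {p, q}" for x by auto
  have "{Suc q..?m} \<inter> {p, q} = {}" "{Suc p..?m} \<inter> {p, q} = {q}" using assms by auto
  then have "card {f\<in>{1..?m} - {p, q}. q < f} = ?m - q"
    "card {f\<in>{1..?m} - {p, q}. p < f} = ?m - p - 1"
    unfolding above by (simp_all add: card_Diff_subset_Int)
  moreover have "card ({1..?m} - {p, q}) = 2*d+2" using assms by (simp add: card_Diff_subset)
  moreover have "{1..?m} - ({1..?m} - {p, q}) = {p, q}" using assms by auto
  ultimately show ?thesis unfolding lower_facet_def using assms by auto
qed

lemma triangulation_simplex_eq_Diff2:
  assumes tri: "triangulation t {1..2*d+4} (2*d+1) T" and R: "R \<in> T"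
  obtains p q where "R = {1..2*d+4} - {p, q}" "1 \<le> p" "p < q" "q \<le> 2*d+4"
proof -
  have RV: "R \<subseteq> {1..2*d+4}" "card R = 2*d+2" using tri R by (auto simp: triangulation_def)
  then have "card ({1..2*d+4} - R) = 2" by (simp add: card_Diff_subset finite_subset)
  then obtain p q where pq: "{1..2*d+4} - R = {p, q}" "p < q" by (rule card_eq_2_sorted)
  then have "R = {1..2*d+4} - {p, q}" "1 \<le> p" "q \<le> 2*d+4" using RV(1) by auto
  then show ?thesis using that pq(2) by blast
qed

definition internal_simplex :: "nat \<Rightarrow> nat \<Rightarrow> nat set" where
  "internal_simplex d i = {v\<in>{1..2*d+3}. if even v then v \<le> 2*i else 2*i+3 \<le> v}"

definition parity_cut :: "nat \<Rightarrow> nat \<Rightarrow> nat set" where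
  "parity_cut m s = {v\<in>{1..m}. if even v = even s then s \<le> v else v < s}"

lemma internal_simplex_eq_Diff_parity_cut:
  "i \<le> d + 1 \<Longrightarrow> internal_simplex d i = {1..2*d+4} - parity_cut (2*d+4) (2*i+2)"
  unfolding internal_simplex_def parity_cut_def by (auto; presburger)

lemma internal_simplex_subset: "internal_simplex d i \<subseteq> {2..2*d+3}"
  unfolding internal_simplex_def by auto

lemma card_parity_cut:
  assumes "s \<in> {1..2*d+4}"
  shows "card (parity_cut (2*d+4) s) = (if even s then d + 3 else d + 2)"
proof (cases "even s")
  case True
  then have "parity_cut (2*d+4) s = {v\<in>{s..2*d+4}. even v} \<union> {v\<in>{1..s - 1}. odd v}"
    using assms unfolding parity_cut_def by auto
  then have "card (parity_cut (2*d+4) s) = card {v\<in>{s..2*d+4}. even v} + card {v\<in>{1..s - 1}. odd v}"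
    by (simp only:) (rule card_Un_disjoint, auto)
  then show ?thesis unfolding card_even_Icc card_odd_Icc using True assms by (auto elim!: evenE)
next
  case False
  then have "parity_cut (2*d+4) s = {v\<in>{s..2*d+4}. odd v} \<union> {v\<in>{1..s - 1}. even v}"
    using assms unfolding parity_cut_def by auto
  then have "card (parity_cut (2*d+4) s) = card {v\<in>{s..2*d+4}. odd v} + card {v\<in>{1..s - 1}. even v}"
    by (simp only:) (rule card_Un_disjoint, auto)
  then show ?thesis unfolding card_even_Icc card_odd_Icc using False assms by (auto elim!: oddE)
qed

lemma parity_cut_no_alternating:
  assumes "u \<in> parity_cut m s" "v \<in> parity_cut m s" "w \<in> parity_cut m s" "u < v" "v < w"
    and "even u \<noteq> even v" "even v \<noteq> even w"
  shows False
  using assms unfolding parity_cut_def by (auto split: if_splits)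

lemma no_alternating_subset_parity_cut:
  fixes C :: "nat set"
  assumes C: "C \<subseteq> {1..m}" and r: "r \<in> C" "r < s" "even r \<noteq> even s"
    and s: "s \<in> C" "\<And>v. v \<in> C \<Longrightarrow> even v = even s \<Longrightarrow> s \<le> v"
    and no_alt: "\<And>u v w. u \<in> C \<Longrightarrow> v \<in> C \<Longrightarrow> w \<in> C \<Longrightarrow> u < v \<Longrightarrow> v < w \<Longrightarrow>
        even u \<noteq> even v \<Longrightarrow> even v \<noteq> even w \<Longrightarrow> False"
  shows "C \<subseteq> parity_cut m s"
proof
  fix v assume v: "v \<in> C"
  have "v < s" if "even v \<noteq> even s"
  proof (rule ccontr)
    assume "\<not> v < s"
    then have "s < v" using that by (cases "v = s") auto
    then show False using no_alt[OF r(1) s(1) v r(2)] r(3) that by auto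
  qed
  then show "v \<in> parity_cut m s" using v C s(2) by (auto simp: parity_cut_def)
qed

lemma no_alternating_obtain_parity_cut:
  fixes C :: "nat set"
  assumes C: "C \<subseteq> {1..m}" and classes: "\<And>b. \<exists>v\<in>C. even v = b"
    and no_alt: "\<And>u v w. u \<in> C \<Longrightarrow> v \<in> C \<Longrightarrow> w \<in> C \<Longrightarrow> u < v \<Longrightarrow> v < w \<Longrightarrow>
        even u \<noteq> even v \<Longrightarrow> even v \<noteq> even w \<Longrightarrow> False"
  obtains s where "s \<in> C" "C \<subseteq> parity_cut m s"
proof -
  have finC: "finite {v\<in>C. even v = b}" for b using finite_subset[OF C finite_atLeastAtMost] by simp
  have ne: "{v\<in>C. even v = b} \<noteq> {}" for b using classes[of b] by blast
  define least where "least b = Min {v\<in>C. even v = b}" for b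
  have "least b \<in> {v\<in>C. even v = b}" for b unfolding least_def by (rule Min_in[OF finC ne])
  moreover have "least b \<le> v" if "v \<in> C" "even v = b" for v b
    unfolding least_def by (rule Min_le[OF finC]) (use that in simp)
  ultimately have least: "least b \<in> C" "even (least b) = b"
    "\<And>v. v \<in> C \<Longrightarrow> even v = b \<Longrightarrow> least b \<le> v" for b
    by auto
  \<comment> \<open>Cut at the later of the two parity class minima.\<close>
  have cut: "C \<subseteq> parity_cut m (least b)" if "least (\<not> b) < least b" for b
  proof (rule no_alternating_subset_parity_cut[OF C least(1) that _ least(1) _ no_alt])
    show "even (least (\<not> b)) \<noteq> even (least b)" by (simp add: least(2))
    show "least b \<le> v" if "v \<in> C" "even v = even (least b)" for v
      using least(3)[of v b] that least(2)[of b] by simp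
  qed
  show ?thesis
  proof (cases "least False < least True")
    case True
    then show ?thesis using that[OF least(1)] cut[of True] by simp
  next
    case False
    then have "least True < least False"
      using least(2)[of True] least(2)[of False] by (cases "least True = least False") auto
    then show ?thesis using that[OF least(1)] cut[of False] by simp
  qed
qed

lemma no_alternating_imp_parity_cut:
  fixes C :: "nat set"
  assumes C: "C \<subseteq> {1..2*d+4}" "card C = d + 3"
    and no_alt: "\<And>u v w. u \<in> C \<Longrightarrow> v \<in> C \<Longrightarrow> w \<in> C \<Longrightarrow> u < v \<Longrightarrow> v < w \<Longrightarrow>
        even u \<noteq> even v \<Longrightarrow> even v \<noteq> even w \<Longrightarrow> False"
  obtains i where "i \<le> d + 1" "C = parity_cut (2*d+4) (2*i+2)"
proof -
  let ?m = "2*d+4"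
  have classes: "\<exists>v\<in>C. even v = b" for b
  proof (rule ccontr)
    assume "\<not> (\<exists>v\<in>C. even v = b)"
    then have "C \<subseteq> {v\<in>{1..?m}. even v = (\<not> b)}" using C(1) by auto
    then have "card C \<le> card {v\<in>{1..?m}. even v = (\<not> b)}" by (intro card_mono) auto
    moreover have "card {v\<in>{1..?m}. even v = (\<not> b)} = d + 2"
      using card_odd_Icc[of 1 ?m] card_even_Icc[of 1 ?m] by (cases b) simp_all
    ultimately show False using C(2) by simp
  qed
  obtain s where s: "s \<in> C" "C \<subseteq> parity_cut ?m s"
    by (rule no_alternating_obtain_parity_cut[OF C(1) classes no_alt])
  have sm: "s \<in> {1..?m}" using s(1) C(1) by blast
  have cut_subset: "parity_cut ?m s \<subseteq> {1..?m}" by (auto simp: parity_cut_def)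
  then have le: "card C \<le> card (parity_cut ?m s)" using card_mono[OF finite_subset s(2)] by blast
  then have "even s" using card_parity_cut[OF sm] C(2) by (auto split: if_splits)
  define i where "i = s div 2 - 1"
  have i: "s = 2*i+2" using \<open>even s\<close> sm by (auto simp: i_def elim!: evenE)
  show ?thesis
  proof
    show "i \<le> d + 1" using i sm by simp
    show "C = parity_cut ?m (2*i+2)"
      using card_subset_eq[OF finite_subset[OF cut_subset] s(2)] le card_parity_cut[OF sm] C(2)
        \<open>even s\<close> i by simp
  qed
qed

lemma internal_simplex_in_nu:
  assumes i: "i \<le> d + 1"
  shows "internal_simplex d i \<in> nu (2*d+4) d"
proof -
  let ?m = "2*d+4" and ?C = "parity_cut (2*d+4) (2*i+2)"
  have A: "internal_simplex d i = {1..?m} - ?C"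
    by (rule internal_simplex_eq_Diff_parity_cut[OF i])
  have "?C \<subseteq> {1..?m}" by (auto simp: parity_cut_def)
  then have "card (internal_simplex d i) = d + 1"
    unfolding A using card_parity_cut[of "2*i+2" d] i by (simp add: card_Diff_subset finite_subset)
  moreover have "\<not> internal_simplex d i \<subseteq> F" if facet: "facet {1..?m} (2*d+1) F" for F
  proof
    assume sub: "internal_simplex d i \<subseteq> F"
    obtain u v w where F: "F = {1..?m} - {u, v, w}" and uvw: "1 \<le> u" "u < v" "v < w" "w \<le> ?m"
      and alt: "even u \<noteq> even v" "even v \<noteq> even w"
      using facet by (rule facet_imp_alternating)
    have "u \<in> {1..?m}" "v \<in> {1..?m}" "w \<in> {1..?m}" using uvw by auto
    then have "u \<in> ?C" "v \<in> ?C" "w \<in> ?C" using sub unfolding A F by blast+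
    then show False using parity_cut_no_alternating uvw(2,3) alt by blast
  qed
  ultimately show ?thesis
    unfolding nu_def using internal_simplex_subset[of d i] by auto
qed

lemma nu_imp_internal_simplex:
  assumes "A \<in> nu (2*d+4) d"
  obtains i where "i \<le> d + 1" "A = internal_simplex d i"
proof -
  let ?m = "2*d+4"
  have A: "A \<subseteq> {1..?m}" "card A = d + 1"
    and not_facet: "\<And>F. facet {1..?m} (2*d+1) F \<Longrightarrow> \<not> A \<subseteq> F"
    using assms unfolding nu_def by auto
  have card: "card ({1..?m} - A) = d + 3" using A by (simp add: card_Diff_subset finite_subset)
  have no_alt: False
    if "u \<in> {1..?m} - A" "v \<in> {1..?m} - A" "w \<in> {1..?m} - A" "u < v" "v < w"
      "even u \<noteq> even v" "even v \<noteq> even w" for u v w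
  proof -
    have "1 \<le> u" "w \<le> ?m" using that(1,3) by auto
    then have "facet {1..?m} (2*d+1) ({1..?m} - {u, v, w})"
      using that(4-7) by (intro alternating_imp_facet) auto
    moreover have "A \<subseteq> {1..?m} - {u, v, w}" using that A(1) by auto
    ultimately show False using not_facet by blast
  qed
  obtain i where i: "i \<le> d + 1" "{1..?m} - A = parity_cut ?m (2*i+2)"
    by (rule no_alternating_imp_parity_cut[of "{1..?m} - A" d, OF Diff_subset card])
      (use no_alt in blast)+
  then have "A = internal_simplex d i"
    using A(1) internal_simplex_eq_Diff_parity_cut[OF i(1)] by auto
  then show ?thesis using that i(1) by blast
qed

lemma nu_subset_interior: "C \<in> nu (2*d+4) d \<Longrightarrow> C \<subseteq> {2..2*d+3}"
  using internal_simplex_subset by (metis nu_imp_internal_simplex)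

lemma radon_punctured:
  assumes m: "even m" and z: "z \<in> {1..m}"
  shows "radon_odd ({1..m} - {z}) = {v\<in>{1..m}. (v < z \<and> even v) \<or> (z < v \<and> odd v)}"
    and "radon_even ({1..m} - {z}) = {v\<in>{1..m}. (v < z \<and> odd v) \<or> (z < v \<and> even v)}"
proof -
  have parity: "even (card {u\<in>{1..m} - {z}. v < u}) \<longleftrightarrow> (v < z \<and> odd v) \<or> (z < v \<and> even v)"
    if v: "v \<in> {1..m}" "v \<noteq> z" for v
  proof -
    have "{u\<in>{1..m} - {z}. v < u} = {Suc v..m} - {z}" using v by auto
    then have "card {u\<in>{1..m} - {z}. v < u} = m - v - (if v < z then 1 else 0)"
      using z by (simp add: card_Diff_singleton_if)
    then show ?thesis using v z m by (cases "v < z") (auto; presburger)+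
  qed
  show "radon_odd ({1..m} - {z}) = {v\<in>{1..m}. (v < z \<and> even v) \<or> (z < v \<and> odd v)}"
    unfolding radon_odd_def using parity by auto
  show "radon_even ({1..m} - {z}) = {v\<in>{1..m}. (v < z \<and> odd v) \<or> (z < v \<and> even v)}"
    unfolding radon_even_def using parity by auto
qed

lemma radon_odd_punctured_eq_internal_simplex:
  assumes "l \<le> d + 1" "z = 2*l+1 \<or> z = 2*l+2"
  shows "radon_odd ({1..2*d+4} - {z}) = internal_simplex d l"
  using assms by (subst radon_punctured) (auto simp: internal_simplex_def; presburger)+

lemma punctured_no_radon_split:
  fixes t :: "nat \<Rightarrow> real"
  assumes mono: "strict_mono_on {1..2*d+4} t" and tri: "triangulation t {1..2*d+4} (2*d+1) T"
    and z: "z \<in> {1..2*d+4}"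
    and R: "R \<in> T" "radon_odd ({1..2*d+4} - {z}) \<subseteq> R"
    and R': "R' \<in> T" "radon_even ({1..2*d+4} - {z}) \<subseteq> R'"
  shows False
  by (rule triangulation_no_radon_split[OF mono _ tri _ _ R R']) (use z in auto)

lemma no_radon_split_Diff2:
  fixes t :: "nat \<Rightarrow> real"
  assumes mono: "strict_mono_on {1..2*d+4} t" and tri: "triangulation t {1..2*d+4} (2*d+1) T"
    and R: "{1..2*d+4} - {p, q} \<in> T" and R': "{1..2*d+4} - {a, b} \<in> T"
    and z: "z \<in> {1..2*d+4}"
    and odd_half: "\<forall>v\<in>{a, b}. \<not> ((v < z \<and> even v) \<or> (z < v \<and> odd v))"
    and even_half: "\<forall>v\<in>{p, q}. \<not> ((v < z \<and> odd v) \<or> (z < v \<and> even v))"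
  shows False
proof (rule punctured_no_radon_split[OF mono tri z R' _ R])
  show "radon_odd ({1..2*d+4} - {z}) \<subseteq> {1..2*d+4} - {a, b}"
    using odd_half by (subst radon_punctured(1)[OF _ z]) auto
  show "radon_even ({1..2*d+4} - {z}) \<subseteq> {1..2*d+4} - {p, q}"
    using even_half by (subst radon_punctured(2)[OF _ z]) auto
qed

section \<open>The gap of a mutable simplex\<close>

lemma card_internal_simplex_less:
  assumes "k \<le> d + 1"
  shows "card {x\<in>internal_simplex d k. x < 2*k} = k - 1"
    and "card {x\<in>internal_simplex d k. x < 2*k+3} = k"
proof -
  have "{x\<in>internal_simplex d k. x < 2*k} = {v\<in>{1..2*k - 1}. even v}"
    "{x\<in>internal_simplex d k. x < 2*k+3} = {v\<in>{1..2*k}. even v}"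
    using assms by (auto simp: internal_simplex_def)
  then show "card {x\<in>internal_simplex d k. x < 2*k} = k - 1"
    and "card {x\<in>internal_simplex d k. x < 2*k+3} = k"
    by (simp_all only: card_even_Icc) simp_all
qed

text \<open>Counting the vertices of \<open>U\<close> below the elements \<open>2k\<close> and \<open>2k+3\<close> of the internal simplex,
  which are consecutive there, locates the missing vertex \<open>e\<close> of the interval between them.
  The case \<open>c = 1\<close> serves \<open>A \<union> B\<close> in \<open>[1, 2d+4]\<close>, the case \<open>c = 0\<close> serves \<open>A \<union> \<Sigma>\<close> in \<open>[2, 2d+3]\<close>.\<close>

lemma internal_simplex_gap:
  assumes k: "k \<le> d + 1" and c: "c \<le> 1"
    and U: "internal_simplex d k \<subseteq> U" "U = {2 - c..2*d+3+c} - {e}" "e \<in> {2 - c..2*d+3+c}"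
    and count: "\<And>a. a \<in> internal_simplex d k \<Longrightarrow>
        card {u\<in>U. u < a} = 2 * card {x\<in>internal_simplex d k. x < a} + c"
  shows "e = 2*k+1 \<or> e = 2*k+2"
proof -
  let ?A = "internal_simplex d k"
  have below: "card {u\<in>U. u < a} = a - (2 - c) - (if e < a then 1 else 0)" if "a \<in> ?A" for a
  proof -
    have "a \<in> {2..2*d+3}" using that internal_simplex_subset by blast
    then have "{u\<in>U. u < a} = {2 - c..<a} - {e}" using U(2) by auto
    then show ?thesis using U(3) by (simp add: card_Diff_singleton_if)
  qed
  have "2*k+1 \<le> e"
  proof (cases "k = 0")
    case True
    then show ?thesis using U(3) c by auto
  next
    case False
    then have mem: "2*k \<in> ?A" using k by (simp add: internal_simplex_def)
    have "2 * (k - 1) + c = 2*k - (2 - c) - (if e < 2*k then 1 else 0)"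
      using count[OF mem] below[OF mem] card_internal_simplex_less(1)[OF k] by simp
    then have "\<not> e < 2*k" using \<open>k \<noteq> 0\<close> c U(3) by (cases "e < 2*k") auto
    moreover have "e \<noteq> 2*k" using mem U by auto
    ultimately show ?thesis by simp
  qed
  moreover have "e \<le> 2*k+2"
  proof (cases "k \<le> d")
    case True
    then have mem: "2*k+3 \<in> ?A" by (simp add: internal_simplex_def)
    have "2 * k + c = 2*k + 3 - (2 - c) - (if e < 2*k+3 then 1 else 0)"
      using count[OF mem] below[OF mem] card_internal_simplex_less(2)[OF k] by simp
    then show ?thesis using c by (auto split: if_splits)
  qed (use U(3) k c in auto)
  ultimately show ?thesis by linarith
qed

lemma mutable_gap:
  assumes "mutable (2*d+4) d T A"
  obtains k e where "k \<le> d + 1" "A = internal_simplex d k" "e = 2*k+1 \<or> e = 2*k+2"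
    "\<And>b. b \<in> {1..2*d+4} \<Longrightarrow> b \<noteq> e \<Longrightarrow> b \<notin> A \<Longrightarrow> {1..2*d+4} - {e, b} \<in> T"
proof -
  let ?m = "2*d+4"
  obtain B where "A \<in> simp ?m d T" and B: "B \<subseteq> {1..?m}" and il: "interlace A B"
    and lower: "{S\<in>T. S \<subseteq> A \<union> B} = lower_triangulation (A \<union> B) (2*d+1)"
    using assms unfolding mutable_def by blast
  then obtain k where k: "k \<le> d + 1" and Ak: "A = internal_simplex d k"
    using nu_imp_internal_simplex unfolding simp_def by blast
  note I = interlaceD[OF il]
  have cardA: "card A = d + 1" using internal_simplex_in_nu[OF k] Ak by (simp add: nu_def)
  have "A \<union> B \<subseteq> {1..?m}" using Ak internal_simplex_subset[of d k] B by auto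
  moreover have "card (A \<union> B) + 1 = card {1..?m}"
    using card_Un_disjoint[OF I(1,2) interlace_disjoint[OF il]] I(3) cardA by simp
  ultimately obtain e where e: "e \<in> {1..?m}" and U: "A \<union> B = {1..?m} - {e}"
    by (rule subset_card_eq_Diff_singleton) auto
  have "e = 2*k+1 \<or> e = 2*k+2"
    by (rule internal_simplex_gap[OF k, of 1 "A \<union> B"])
      (use e U Ak interlace_card_less_union_fst[OF il] in auto)
  moreover have "{1..?m} - {e, b} \<in> T" if "b \<in> {1..?m}" "b \<noteq> e" "b \<notin> A" for b
  proof -
    have "b \<in> B" using that U by blast
    then have "(A \<union> B) - {b} \<in> T"
      using interlace_Diff_in_lower_triangulation[OF il _ cardA] lower by blast
    moreover have "(A \<union> B) - {b} = {1..?m} - {e, b}" using U by blast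
    ultimately show ?thesis by simp
  qed
  ultimately show ?thesis using that k Ak by blast
qed

lemma support_gap:
  assumes k: "k \<le> d + 1" and il: "interlace \<Sigma> (internal_simplex d k)"
  obtains x where "x = 2*k+1 \<or> x = 2*k+2" "internal_simplex d k \<union> \<Sigma> = {2..2*d+3} - {x}"
proof -
  let ?A = "internal_simplex d k"
  note I = interlaceD[OF il]
  have "\<Sigma> \<subseteq> {2..2*d+3}"
  proof
    fix s assume "s \<in> \<Sigma>"
    then obtain a b where "a \<in> ?A" "b \<in> ?A" "a < s" "s < b" using interlace_between[OF il] by blast
    then show "s \<in> {2..2*d+3}" using internal_simplex_subset[of d k] by fastforce
  qed
  then have "?A \<union> \<Sigma> \<subseteq> {2..2*d+3}" using internal_simplex_subset by blast
  moreover have "card (?A \<union> \<Sigma>) + 1 = card {2..2*d+3}"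
    using card_Un_disjoint[OF I(2,1)] interlace_disjoint[OF il] I(3)
      internal_simplex_in_nu[OF k] by (auto simp: nu_def Int_commute)
  ultimately obtain x where x: "x \<in> {2..2*d+3}" and U: "?A \<union> \<Sigma> = {2..2*d+3} - {x}"
    by (rule subset_card_eq_Diff_singleton) auto
  have "x = 2*k+1 \<or> x = 2*k+2"
    by (rule internal_simplex_gap[OF k, of 0 "?A \<union> \<Sigma>"])
      (use x U interlace_card_less_union_snd[OF il] in \<open>auto simp: Un_commute\<close>)
  then show ?thesis using that U by blast
qed

text \<open>If \<open>e\<close> lay in an internal simplex \<open>internal_simplex d l\<close> of \<open>T\<close>, the circuit obtained by
  deleting the vertex \<open>z\<close> of the parity of \<open>e\<close> among \<open>2l+1, 2l+2\<close> would have one Radon half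
  \<open>internal_simplex d l\<close> and the other half inside the simplex \<open>[m] - {e, z}\<close> of \<open>T\<close>.\<close>

lemma gap_not_in_simp:
  fixes t :: "nat \<Rightarrow> real"
  assumes mono: "strict_mono_on {1..2*d+4} t" and tri: "triangulation t {1..2*d+4} (2*d+1) T"
    and k: "k \<le> d + 1" and e: "e = 2*k+1 \<or> e = 2*k+2"
    and facets: "\<And>b. b \<in> {1..2*d+4} \<Longrightarrow> b \<noteq> e \<Longrightarrow> b \<notin> internal_simplex d k \<Longrightarrow>
        {1..2*d+4} - {e, b} \<in> T"
    and A': "A' \<in> simp (2*d+4) d T"
  shows "e \<notin> A'"
proof
  assume eA': "e \<in> A'"
  have "A' \<in> nu (2*d+4) d" and "\<exists>R\<in>T. A' \<subseteq> R" using A' by (auto simp: simp_def)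
  then obtain R l where R: "R \<in> T" "A' \<subseteq> R" and l: "l \<le> d + 1" "A' = internal_simplex d l"
    using nu_imp_internal_simplex by metis
  define z where "z = (if even e then 2*l+2 else 2*l+1)"
  have z: "z \<in> {1..2*d+4}" "z \<noteq> e" "z \<notin> internal_simplex d k"
    using e eA' l k by (auto simp: z_def internal_simplex_def)
  have "radon_odd ({1..2*d+4} - {z}) \<subseteq> R"
    using radon_odd_punctured_eq_internal_simplex[OF l(1), of z] R(2) l(2) by (simp add: z_def)
  moreover have "radon_even ({1..2*d+4} - {z}) \<subseteq> {1..2*d+4} - {e, z}"
  proof -
    have "(even e \<and> e < z) \<or> (odd e \<and> z < e)"
      using eA' l(2) by (auto simp: z_def internal_simplex_def)
    then have "e \<notin> radon_even ({1..2*d+4} - {z})"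
      by (subst radon_punctured(2)[OF _ z(1)]) auto
    then show ?thesis by (auto simp: radon_even_def)
  qed
  ultimately show False by (rule punctured_no_radon_split[OF mono tri z(1) R(1) _ facets[OF z]])
qed

lemma boundary_gap_simplex_lower:
  fixes t :: "nat \<Rightarrow> real"
  assumes mono: "strict_mono_on {1..2*d+4} t" and tri: "triangulation t {1..2*d+4} (2*d+1) T"
    and e: "e = 1 \<or> e = 2*d+4"
    and facets: "\<And>b. b \<in> {1..2*d+4} \<Longrightarrow> even b \<noteq> even e \<Longrightarrow> {1..2*d+4} - {e, b} \<in> T"
    and R: "R \<in> T"
  shows "lower_facet {1..2*d+4} (2*d+2) R"
proof -
  let ?m = "2*d+4"
  obtain p q where Rpq: "R = {1..?m} - {p, q}" and pq: "1 \<le> p" "p < q" "q \<le> ?m"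
    using triangulation_simplex_eq_Diff2[OF tri R] by blast
  have split: False
    if "z \<in> {1..?m}" "b \<in> {1..?m}" "even b \<noteq> even e"
      "\<forall>v\<in>{e, b}. \<not> ((v < z \<and> even v) \<or> (z < v \<and> odd v))"
      "\<forall>v\<in>{p, q}. \<not> ((v < z \<and> odd v) \<or> (z < v \<and> even v))" for z b
    using no_radon_split_Diff2[OF mono tri R[unfolded Rpq] facets[OF that(2,3)] that(1,4,5)] .
  have "odd p \<and> even q"
  proof (rule ccontr)
    assume "\<not> (odd p \<and> even q)"
    with e consider "e = 1" "even p" "even q" | "e = 1" "even p" "odd q" | "e = 1" "odd p" "odd q"
      | "e = ?m" "even p" "odd q" | "e = ?m" "even p" "even q" | "e = ?m" "odd p" "odd q"
      by blast
    then show False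
    proof cases
      case 1 show False by (rule split[of q q]) (use 1 pq in auto)
    next
      case 2 show False by (rule split[of q ?m]) (use 2 pq in auto)
    next
      case 3 show False by (rule split[of p ?m]) (use 3 pq in auto)
    next
      case 4 show False by (rule split[of q q]) (use 4 pq in auto)
    next
      case 5 show False by (rule split[of q 1]) (use 5 pq in auto)
    next
      case 6 show False by (rule split[of p p]) (use 6 pq in auto)
    qed
  qed
  then show ?thesis using lower_facet_Diff2[OF pq] Rpq by simp
qed

lemma boundary_gap_imp_lower:
  fixes t :: "nat \<Rightarrow> real"
  assumes mono: "strict_mono_on {1..2*d+4} t" and tri: "triangulation t {1..2*d+4} (2*d+1) T"
    and e: "e = 1 \<or> e = 2*d+4"
    and facets: "\<And>b. b \<in> {1..2*d+4} \<Longrightarrow> even b \<noteq> even e \<Longrightarrow> {1..2*d+4} - {e, b} \<in> T"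
  shows "T = lower_triangulation {1..2*d+4} (2*d+1)"
  using boundary_gap_simplex_lower[OF mono tri e facets]
  by (intro triangulation_eq_lower_triangulation[OF mono finite_atLeastAtMost tri]) simp

lemma mutable_gap_interior:
  fixes t :: "nat \<Rightarrow> real"
  assumes mono: "strict_mono_on {1..2*d+4} t" and tri: "triangulation t {1..2*d+4} (2*d+1) T"
    and not_lower: "T \<noteq> lower_triangulation {1..2*d+4} (2*d+1)"
    and k: "k \<le> d + 1" and e: "e = 2*k+1 \<or> e = 2*k+2"
    and facets: "\<And>b. b \<in> {1..2*d+4} \<Longrightarrow> b \<noteq> e \<Longrightarrow> b \<notin> internal_simplex d k \<Longrightarrow>
        {1..2*d+4} - {e, b} \<in> T"
  shows "e \<in> {2..2*d+3}"
proof (rule ccontr)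
  assume "e \<notin> {2..2*d+3}"
  then have boundary: "e = 1 \<and> k = 0 \<or> e = 2*d+4 \<and> k = d + 1" using e k by auto
  have "{1..2*d+4} - {e, b} \<in> T" if "b \<in> {1..2*d+4}" "even b \<noteq> even e" for b
    using that boundary by (intro facets) (auto simp: internal_simplex_def)
  then have "T = lower_triangulation {1..2*d+4} (2*d+1)"
    using boundary by (intro boundary_gap_imp_lower[OF mono tri]) auto
  with not_lower show False ..
qed

lemma internal_simplex_through_gap:
  assumes e: "e = 2*k+1 \<or> e = 2*k+2" "e \<in> {2..2*d+3}"
    and x: "x = 2*k+1 \<or> x = 2*k+2" "x \<noteq> e"
  obtains l where "l \<le> d + 1" "internal_simplex d l \<subseteq> {2..2*d+3} - {x}" "e \<in> internal_simplex d l"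
proof (cases "even e")
  case True
  then have "x = e - 1" using e x by auto
  then have "internal_simplex d (d + 1) \<subseteq> {2..2*d+3} - {x}" "e \<in> internal_simplex d (d + 1)"
    using e True by (auto simp: internal_simplex_def)
  then show ?thesis using that by blast
next
  case False
  then have "x = e + 1" using e x by auto
  then have "internal_simplex d 0 \<subseteq> {2..2*d+3} - {x}" "e \<in> internal_simplex d 0"
    using e False by (auto simp: internal_simplex_def)
  then show ?thesis using that by blast
qed

theorem lemma3p8:
  fixes d :: nat and t :: "nat \<Rightarrow> real" and T :: "nat set set"
    and A \<Sigma> :: "nat set"
  assumes t_mono: "strict_mono_on {1..2 * d + 4} t"
    and tri: "triangulation t {1..2 * d + 4} (2 * d + 1) T"
    and not_up: "T \<noteq> upper_triangulation {1..2 * d + 4} (2 * d + 1)"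
    and not_low: "T \<noteq> lower_triangulation {1..2 * d + 4} (2 * d + 1)"
    and A_mut: "mutable (2 * d + 4) d T A"
    and A_unique: "\<forall>A'. mutable (2 * d + 4) d T A' \<longrightarrow> A' = A"
    and \<Sigma>_supp: "support (2 * d + 4) d (simp (2 * d + 4) d T) A \<Sigma>"
    and \<Sigma>_unique: "\<forall>\<Sigma>'. support (2 * d + 4) d (simp (2 * d + 4) d T) A \<Sigma>' \<longrightarrow> \<Sigma>' = \<Sigma>"
  shows "\<forall>A' \<in> simp (2 * d + 4) d T. A' \<subseteq> A \<union> \<Sigma>"
proof -
  \<comment> \<open>The argument works for every mutable simplex and every support.\<close>
  obtain k e where k: "k \<le> d + 1" and A: "A = internal_simplex d k" and e: "e = 2*k+1 \<or> e = 2*k+2"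
    and facets: "\<And>b. b \<in> {1..2*d+4} \<Longrightarrow> b \<noteq> e \<Longrightarrow> b \<notin> A \<Longrightarrow> {1..2*d+4} - {e, b} \<in> T"
    using mutable_gap[OF A_mut] by blast
  note facets' = facets[unfolded A]
  have e_inner: "e \<in> {2..2*d+3}" by (rule mutable_gap_interior[OF t_mono tri not_low k e facets'])
  obtain x where x: "x = 2*k+1 \<or> x = 2*k+2" and A\<Sigma>: "A \<union> \<Sigma> = {2..2*d+3} - {x}"
    using support_gap[OF k] \<Sigma>_supp unfolding A support_def by blast
  have avoid: "e \<notin> A'" if "A' \<in> simp (2*d+4) d T" for A'
    using gap_not_in_simp[OF t_mono tri k e facets' that] .
  have "x = e"
  proof (rule ccontr)
    assume "x \<noteq> e"
    then obtain l where l: "l \<le> d + 1" "internal_simplex d l \<subseteq> A \<union> \<Sigma>" "e \<in> internal_simplex d l"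
      using internal_simplex_through_gap[OF e e_inner x] A\<Sigma> by metis
    then have "internal_simplex d l \<in> simp (2*d+4) d T"
      using \<Sigma>_supp internal_simplex_in_nu[OF l(1)] by (auto simp: support_def)
    then show False using avoid l(3) by blast
  qed
  then show ?thesis
    using avoid A\<Sigma> nu_subset_interior by (fastforce simp: simp_def)
qed

end
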